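(* Let $I$ be a stable matching instance with $k$-range preferences and $n$ men and $n$ women, and let $G(I)$ be the rotation digraph of $I$. Suppose $(\rho, \sigma)$ is a directed edge in $G(I)$. Then there exists $i \in [n]$ such that $i \in \mathrm{ext}(\rho) \cap \mathrm{ext}(\sigma)$.
   Context: An SM instance $I$ has men and women with complete strict preference lists; $P_a(b)$ is the rank $a$ assigns $b$. For an agent $a$, $\min\mathrm{rank}(a)$ and $\max\mathrm{rank}(a)$ are the minimum and maximum of $P_b(a)$ over agents $b$ of the opposite sex; $I$ has $k$-range preferences if $\max\mathrm{rank}(a) - \min\mathrm{rank}(a) \leq k-1$ for all $a$. A rotation is a circular list $(m_1,w_1),\ldots,(m_\ell,w_\ell)$ of pairs of some stable matching $\mu$ such that $w_{i+1}$ is the first woman after $w_i$ on $m_i$'s list who prefers $m_i$ to her partner $m_{i+1}$ in $\mu$; eliminating it matches $m_i$ to $w_{i+1}$ ("moves $m_i$ down to $w_{i+1}$", moving $m_i$ below any woman strictly between $w_i,w_{i+1}$ on his list; it moves $w_i$ up to $m_{i-1}$, above any man strictly between). The rotation digraph $G(I)$ (computed by Gusfield's algorithm) is a DAG on the rotations whose transitive closure is the rotation poset, with an edge $(\rho',\rho)$ exactly when (Rule 1) $(m,w)$ is in $\rho$ and $\rho'$ is the rotation that moves $m$ to $w$, or (Rule 2) $(m,w)$ is not in $\rho$, $\rho'\ne\rho$ is the rotation moving $w$ above $m$ and $\rho$ is the rotation moving $m$ below $w$. For a rotation $\rho$, $\mathrm{ext}(\rho) = [\min\mathrm{rank}_{\min}(\rho)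 - 2k+1, \min\mathrm{rank}_{\max}(\rho) + 2k-1]$, where $\min\mathrm{rank}_{\min}(\rho)$ and $\min\mathrm{rank}_{\max}(\rho)$ are the minimum and maximum of $\min\mathrm{rank}(a)$ over agents $a$ appearing in $\rho$. *)

theory Defs
  imports Main
begin

(* Conventions: men and women are both indexed by {0..<n} (nat).
   pm m w = rank man m assigns woman w; pw w m = rank woman w assigns man m.
   Ranks are 1..n, smaller rank = more preferred. *)

definition pref_complete :: "nat \<Rightarrow> (nat \<Rightarrow> nat \<Rightarrow> nat) \<Rightarrow> bool" where
  "pref_complete n p \<longleftrightarrow> (\<forall>a<n. bij_betw (p a) {..<n} {1..n})"

definition sm_instance :: "nat \<Rightarrow> (nat \<Rightarrow> nat \<Rightarrow> nat) \<Rightarrow> (nat \<Rightarrow> nat \<Rightarrow> nat) \<Rightarrow> bool" where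
  "sm_instance n pm pw \<longleftrightarrow> pref_complete n pm \<and> pref_complete n pw"

definition minrank_man :: "nat \<Rightarrow> (nat \<Rightarrow> nat \<Rightarrow> nat) \<Rightarrow> nat \<Rightarrow> nat" where
  "minrank_man n pw m = Min ((\<lambda>w. pw w m) ` {..<n})"
definition maxrank_man :: "nat \<Rightarrow> (nat \<Rightarrow> nat \<Rightarrow> nat) \<Rightarrow> nat \<Rightarrow> nat" where
  "maxrank_man n pw m = Max ((\<lambda>w. pw w m) ` {..<n})"
definition minrank_woman :: "nat \<Rightarrow> (nat \<Rightarrow> nat \<Rightarrow> nat) \<Rightarrow> nat \<Rightarrow> nat" where
  "minrank_woman n pm w = Min ((\<lambda>m. pm m w) ` {..<n})"
definition maxrank_woman :: "nat \<Rightarrow> (nat \<Rightarrow> nat \<Rightarrow> nat) \<Rightarrow> nat \<Rightarrow> nat" where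
  "maxrank_woman n pm w = Max ((\<lambda>m. pm m w) ` {..<n})"

definition k_range :: "nat \<Rightarrow> (nat \<Rightarrow> nat \<Rightarrow> nat) \<Rightarrow> (nat \<Rightarrow> nat \<Rightarrow> nat) \<Rightarrow> nat \<Rightarrow> bool" where
  "k_range n pm pw k \<longleftrightarrow>
     (\<forall>m<n. int (maxrank_man n pw m) - int (minrank_man n pw m) \<le> int k - 1) \<and>
     (\<forall>w<n. int (maxrank_woman n pm w) - int (minrank_woman n pm w) \<le> int k - 1)"

definition is_matching :: "nat \<Rightarrow> (nat \<Rightarrow> nat) \<Rightarrow> bool" where
  "is_matching n mu \<longleftrightarrow> bij_betw mu {..<n} {..<n}"

definition prefers_to_partner :: "nat \<Rightarrow> (nat \<Rightarrow> nat \<Rightarrow> nat) \<Rightarrow> (nat \<Rightarrow> nat) \<Rightarrow> nat \<Rightarrow> nat \<Rightarrow> bool" where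
  "prefers_to_partner n pw mu w m \<longleftrightarrow> (\<forall>m'<n. mu m' = w \<longrightarrow> pw w m < pw w m')"

definition stable :: "nat \<Rightarrow> (nat \<Rightarrow> nat \<Rightarrow> nat) \<Rightarrow> (nat \<Rightarrow> nat \<Rightarrow> nat) \<Rightarrow> (nat \<Rightarrow> nat) \<Rightarrow> bool" where
  "stable n pm pw mu \<longleftrightarrow> is_matching n mu \<and>
     \<not> (\<exists>m<n. \<exists>w<n. pm m w < pm m (mu m) \<and> prefers_to_partner n pw mu w m)"

(* rho = [(m_0,w_0),...,(m_{l-1},w_{l-1})], indices taken cyclically *)
definition nxt :: "'a list \<Rightarrow> nat \<Rightarrow> 'a" where
  "nxt xs i = xs ! ((i + 1) mod length xs)"
definition prv :: "'a list \<Rightarrow> nat \<Rightarrow> 'a" where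
  "prv xs i = xs ! ((i + length xs - 1) mod length xs)"

definition is_rotation_of :: "nat \<Rightarrow> (nat \<Rightarrow> nat \<Rightarrow> nat) \<Rightarrow> (nat \<Rightarrow> nat \<Rightarrow> nat) \<Rightarrow> (nat \<Rightarrow> nat)
    \<Rightarrow> (nat \<times> nat) list \<Rightarrow> bool" where
  "is_rotation_of n pm pw mu rho \<longleftrightarrow> stable n pm pw mu \<and> rho \<noteq> [] \<and> distinct rho \<and>
     (\<forall>i<length rho.
        let mi = fst (rho ! i); wi = snd (rho ! i);
            mj = fst (nxt rho i); wj = snd (nxt rho i)
        in mi < n \<and> wi < n \<and> mu mi = wi \<and>
           pm mi wi < pm mi wj \<and> pw wj mi < pw wj mj \<and>
           (\<forall>w<n. pm mi wi < pm mi w \<and> pm mi w < pm mi wj \<longrightarrow>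
                   \<not> prefers_to_partner n pw mu w mi))"

definition is_rotation :: "nat \<Rightarrow> (nat \<Rightarrow> nat \<Rightarrow> nat) \<Rightarrow> (nat \<Rightarrow> nat \<Rightarrow> nat) \<Rightarrow> (nat \<times> nat) list \<Rightarrow> bool" where
  "is_rotation n pm pw rho \<longleftrightarrow> (\<exists>mu. is_rotation_of n pm pw mu rho)"

(* eliminating rho moves m_i to w_{i+1} *)
definition moves_to :: "(nat \<times> nat) list \<Rightarrow> nat \<Rightarrow> nat \<Rightarrow> bool" where
  "moves_to rho m w \<longleftrightarrow> (\<exists>i<length rho. fst (rho ! i) = m \<and> snd (nxt rho i) = w)"

definition moves_below :: "(nat \<Rightarrow> nat \<Rightarrow> nat) \<Rightarrow> (nat \<times> nat) list \<Rightarrow> nat \<Rightarrow> nat \<Rightarrow> bool" where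
  "moves_below pm rho m w \<longleftrightarrow> (\<exists>i<length rho. fst (rho ! i) = m \<and>
      pm m (snd (rho ! i)) < pm m w \<and> pm m w < pm m (snd (nxt rho i)))"

definition moves_above :: "(nat \<Rightarrow> nat \<Rightarrow> nat) \<Rightarrow> (nat \<times> nat) list \<Rightarrow> nat \<Rightarrow> nat \<Rightarrow> bool" where
  "moves_above pw rho w m \<longleftrightarrow> (\<exists>i<length rho. snd (rho ! i) = w \<and>
      pw w (fst (prv rho i)) < pw w m \<and> pw w m < pw w (fst (rho ! i)))"

definition rot_edge :: "nat \<Rightarrow> (nat \<Rightarrow> nat \<Rightarrow> nat) \<Rightarrow> (nat \<Rightarrow> nat \<Rightarrow> nat)
    \<Rightarrow> (nat \<times> nat) list \<Rightarrow> (nat \<times> nat) list \<Rightarrow> bool" where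
  "rot_edge n pm pw rho' rho \<longleftrightarrow> is_rotation n pm pw rho' \<and> is_rotation n pm pw rho \<and>
     ((\<exists>m w. (m, w) \<in> set rho \<and> moves_to rho' m w) \<or>
      (\<exists>m w. (m, w) \<notin> set rho \<and> set rho' \<noteq> set rho \<and>
             moves_above pw rho' w m \<and> moves_below pm rho m w))"

definition agent_minranks :: "nat \<Rightarrow> (nat \<Rightarrow> nat \<Rightarrow> nat) \<Rightarrow> (nat \<Rightarrow> nat \<Rightarrow> nat) \<Rightarrow> (nat \<times> nat) list \<Rightarrow> nat set" where
  "agent_minranks n pm pw rho =
     (\<lambda>p. minrank_man n pw (fst p)) ` set rho \<union> (\<lambda>p. minrank_woman n pm (snd p)) ` set rho"

definition ext :: "nat \<Rightarrow> (nat \<Rightarrow> nat \<Rightarrow> nat) \<Rightarrow> (nat \<Rightarrow> nat \<Rightarrow> nat) \<Rightarrow> nat \<Rightarrow> (nat \<times> nat) list \<Rightarrow> int set" where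
  "ext n pm pw k rho =
     {int (Min (agent_minranks n pm pw rho)) - 2 * int k + 1 ..
      int (Max (agent_minranks n pm pw rho)) + 2 * int k - 1}"

end

(* An edge of the rotation digraph comes from a man m and a woman w. Under Rule 1, m appears in
   both rotations and his minrank lies in both ext intervals. Under Rule 2, w appears in the source
   rotation and m in the target one, and the side conditions of the rule make m weakly prefer his
   partner to w in the source matching and w weakly prefer her partner to m in the target matching.
   A counting argument shows that in a stable matching with k-range preferences the minrank of an
   agent's partner exceeds the agent's own by less than 2k; combined with the weak preferences this
   puts the minranks of m and w within 3k - 2 of each other, close enough for the two ext intervals,
   which stretch 2k - 1 beyond them, to share a point of [1, n]. *)

theory Submission
  imports Defs
begin

definition minrank :: "nat \<Rightarrow> (nat \<Rightarrow> nat \<Rightarrow> nat) \<Rightarrow> nat \<Rightarrow> nat" where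
  "minrank n p b = Min ((\<lambda>a. p a b) ` {..<n})"

lemma minrank_man_eq_minrank: "minrank_man = minrank"
  by (simp add: fun_eq_iff minrank_man_def minrank_def)

lemma minrank_woman_eq_minrank: "minrank_woman = minrank"
  by (simp add: fun_eq_iff minrank_woman_def minrank_def)

lemma minrank_le: "a < n \<Longrightarrow> minrank n p b \<le> p a b"
  unfolding minrank_def by (rule Min_le) auto

lemma pref_complete_rank_bounds:
  "pref_complete n p \<Longrightarrow> a < n \<Longrightarrow> b < n \<Longrightarrow> p a b \<in> {1..n}"
  unfolding pref_complete_def bij_betw_def by blast

lemma minrank_bounds:
  assumes "pref_complete n p" and "b < n"
  shows "minrank n p b \<in> {1..n}"
proof -
  have "minrank n p b \<in> (\<lambda>a. p a b) ` {..<n}"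
    unfolding minrank_def using assms(2) by (intro Min_in) auto
  then show ?thesis using pref_complete_rank_bounds[OF assms(1) _ assms(2)] by auto
qed

lemma card_rank_atMost:
  assumes "bij_betw h {..<n} {1..n}"
  shows "card {x\<in>{..<n}. h x \<le> c} = min c n"
proof -
  have "h ` {x\<in>{..<n}. h x \<le> c} = {v \<in> h ` {..<n}. v \<le> c}"
    by auto
  also have "\<dots> = {1..min c n}"
    using assms by (auto simp: bij_betw_def)
  finally have "bij_betw h {x\<in>{..<n}. h x \<le> c} {1..min c n}"
    using assms by (auto intro: bij_betw_subset)
  then show ?thesis
    by (simp add: bij_betw_same_card)
qed

definition k_range_side :: "nat \<Rightarrow> (nat \<Rightarrow> nat \<Rightarrow> nat) \<Rightarrow> nat \<Rightarrow> bool" where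
  "k_range_side n p k \<longleftrightarrow> (\<forall>a<n. \<forall>b<n. p a b < minrank n p b + k)"

lemma k_range_side_if_spread:
  assumes "\<And>b. b < n \<Longrightarrow> int (Max ((\<lambda>a. p a b) ` {..<n})) - int (minrank n p b) \<le> int k - 1"
  shows "k_range_side n p k"
  unfolding k_range_side_def
proof (intro allI impI)
  fix a b assume "a < n" "b < n"
  then have "p a b \<le> Max ((\<lambda>a. p a b) ` {..<n})"
    by (intro Max_ge) auto
  then show "p a b < minrank n p b + k"
    using assms[OF \<open>b < n\<close>] by linarith
qed

lemma k_range_imp_k_range_side:
  assumes "k_range n pm pw k"
  shows "k_range_side n pm k" and "k_range_side n pw k"
  using assms unfolding k_range_def maxrank_man_def maxrank_woman_def
    minrank_man_eq_minrank minrank_woman_eq_minrank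
  by (auto intro: k_range_side_if_spread)

lemma k_range_side_pos: "k_range_side n p k \<Longrightarrow> 0 < n \<Longrightarrow> 0 < k"
  unfolding k_range_side_def using minrank_le[of 0 n p 0] by fastforce

text \<open>A stable matching seen from one side: \<open>f\<close> sends each agent \<open>x\<close> of this side to its
  partner and \<open>g\<close> is its inverse; \<open>P x y\<close> is the rank \<open>x\<close> gives \<open>y\<close> and \<open>Q y x\<close> the rank \<open>y\<close>
  gives \<open>x\<close>.\<close>

locale stable_maps =
  fixes n :: nat and P Q :: "nat \<Rightarrow> nat \<Rightarrow> nat" and f g :: "nat \<Rightarrow> nat"
  assumes P_complete: "pref_complete n P" and Q_complete: "pref_complete n Q"
    and f_range: "x < n \<Longrightarrow> f x < n" and g_f: "x < n \<Longrightarrow> g (f x) = x"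
    and g_range: "y < n \<Longrightarrow> g y < n" and f_g: "y < n \<Longrightarrow> f (g y) = y"
    and no_blocking: "x < n \<Longrightarrow> y < n \<Longrightarrow> P x y < P x (f x) \<Longrightarrow> Q y (g y) \<le> Q y x"
begin

lemma swap: "stable_maps n Q P g f"
proof
  show "P y (f y) \<le> P y x" if "x < n" "y < n" "Q x y < Q x (g x)" for x y
    using no_blocking[OF that(2,1)] that(3) by (meson not_le)
qed (use P_complete Q_complete f_range g_range f_g g_f in auto)

text \<open>Let \<open>a\<close> and \<open>b\<close> be the best ranks received by \<open>f x\<close> and by \<open>x\<close>. Each of the \<open>a - 1\<close>
  agents \<open>y'\<close> that \<open>x\<close> ranks better than \<open>a\<close> is preferred by \<open>x\<close> to \<open>f x\<close>, so \<open>y'\<close> prefers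
  \<open>g y'\<close> to \<open>x\<close>; by the \<open>k\<close>-range property \<open>g y'\<close> then receives only ranks up to
  \<open>b + 2k - 2\<close>, in particular from \<open>f x\<close>. Injectivity of \<open>g\<close> gives \<open>a - 1 \<le> b + 2k - 2\<close>.\<close>

lemma minrank_partner_less:
  assumes Q_range: "k_range_side n Q k" and x: "x < n"
  shows "minrank n P (f x) < minrank n Q x + 2 * k"
proof -
  define y where "y = f x"
  define a where "a = minrank n P y"
  define b where "b = minrank n Q x"
  have y: "y < n"
    using f_range x by (simp add: y_def)
  have a_le: "a \<le> P x y"
    using minrank_le x by (simp add: a_def)
  also have "P x y \<le> n"
    using pref_complete_rank_bounds[OF P_complete x y] by simp
  finally have "a \<le> n" .
  have b_range: "Q y' x < b + k" if "y' < n" for y'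
    using Q_range that x unfolding k_range_side_def b_def by blast
  have "0 < k"
    using k_range_side_pos[OF Q_range] x by simp
  define S where "S = {y'\<in>{..<n}. P x y' \<le> a - 1}"
  define T where "T = {x'\<in>{..<n}. Q y x' \<le> b + 2 * k - 2}"
  have card_S: "card S = a - 1"
    using card_rank_atMost P_complete x \<open>a \<le> n\<close> unfolding S_def pref_complete_def by simp
  have card_T: "card T \<le> b + 2 * k - 2"
    using card_rank_atMost Q_complete y unfolding T_def pref_complete_def by simp
  have "g ` S \<subseteq> T"
  proof
    fix x' assume "x' \<in> g ` S"
    then obtain y' where y': "y' < n" "P x y' \<le> a - 1" and x': "x' = g y'"
      unfolding S_def by auto
    have "P x y' < P x (f x)"
      using y' a_le pref_complete_rank_bounds[OF P_complete x y'(1)] unfolding y_def by simp arith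
    then have "Q y' x' \<le> Q y' x"
      using no_blocking x y' x' by blast
    also have "Q y' x < b + k"
      using b_range y' by blast
    finally have "minrank n Q x' < b + k"
      using minrank_le[OF y'(1), of Q x'] by simp
    moreover have "Q y x' < minrank n Q x' + k"
      using Q_range g_range y y' x' unfolding k_range_side_def by blast
    ultimately show "x' \<in> T"
      using g_range y' x' unfolding T_def by simp
  qed
  moreover have "inj_on g S"
    by (rule inj_on_inverseI[where g = f]) (simp add: S_def f_g)
  ultimately have "card S \<le> card T"
    by (intro card_inj_on_le) (auto simp: T_def)
  then show ?thesis
    using card_S card_T \<open>0 < k\<close> by (simp add: a_def b_def y_def)
qed

lemma minrank_less_if_weakly_prefers_partner:
  assumes P_range: "k_range_side n P k" and "x < n" "y < n" and "P x (f x) \<le> P x y"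
  shows "minrank n Q x + 1 < minrank n P y + 3 * k"
proof -
  have "minrank n Q x = minrank n Q (g (f x))"
    using g_f assms(2) by simp
  also have "\<dots> < minrank n P (f x) + 2 * k"
    using stable_maps.minrank_partner_less[OF swap P_range] f_range assms(2) by blast
  also have "minrank n P (f x) \<le> P x y"
    using minrank_le[OF assms(2), of P "f x"] assms(4) by simp
  finally have "minrank n Q x < P x y + 2 * k"
    by simp
  moreover have "P x y < minrank n P y + k"
    using P_range assms(2,3) unfolding k_range_side_def by blast
  ultimately show ?thesis
    by simp
qed

end

lemma prefers_to_partner_iff:
  assumes "is_matching n mu" and "w < n"
  shows "prefers_to_partner n pw mu w m \<longleftrightarrow> pw w m < pw w (inv_into {..<n} mu w)"
proof -
  have bij: "bij_betw mu {..<n} {..<n}"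
    using assms(1) unfolding is_matching_def .
  have "m' = inv_into {..<n} mu w" if "m' < n" "mu m' = w" for m'
    using bij that by (auto simp: bij_betw_def)
  moreover have "inv_into {..<n} mu w < n" "mu (inv_into {..<n} mu w) = w"
    using bij_betw_apply[OF bij_betw_inv_into[OF bij]] bij_betw_inv_into_right[OF bij] assms(2)
    by auto
  ultimately show ?thesis
    unfolding prefers_to_partner_def by metis
qed

lemma stable_imp_stable_maps:
  assumes "sm_instance n pm pw" and "stable n pm pw mu"
  shows "stable_maps n pm pw mu (inv_into {..<n} mu)"
proof -
  have matching: "is_matching n mu"
    using assms(2) unfolding stable_def by blast
  then have bij: "bij_betw mu {..<n} {..<n}"
    unfolding is_matching_def .
  show ?thesis
  proof
    show "pref_complete n pm" "pref_complete n pw"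
      using assms(1) unfolding sm_instance_def by auto
    show "mu x < n" "inv_into {..<n} mu (mu x) = x" if "x < n" for x
      using bij_betw_apply[OF bij] bij_betw_inv_into_left[OF bij] that by auto
    show "inv_into {..<n} mu y < n" "mu (inv_into {..<n} mu y) = y" if "y < n" for y
      using bij_betw_apply[OF bij_betw_inv_into[OF bij]] bij_betw_inv_into_right[OF bij] that
      by auto
    show "pw y (inv_into {..<n} mu y) \<le> pw y x"
      if "x < n" "y < n" "pm x y < pm x (mu x)" for x y
      using assms(2) prefers_to_partner_iff[OF matching] that
      unfolding stable_def by (meson not_le)
  qed
qed

lemma is_rotation_ofD:
  assumes "is_rotation_of n pm pw mu rho" and "i < length rho"
  shows "stable n pm pw mu" and "fst (rho ! i) < n" and "snd (rho ! i) < n"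
    and "mu (fst (rho ! i)) = snd (rho ! i)"
    and "\<lbrakk>w < n; pm (fst (rho ! i)) (snd (rho ! i)) < pm (fst (rho ! i)) w;
          pm (fst (rho ! i)) w < pm (fst (rho ! i)) (snd (nxt rho i))\<rbrakk>
         \<Longrightarrow> \<not> prefers_to_partner n pw mu w (fst (rho ! i))"
  using assms unfolding is_rotation_of_def Let_def by auto

lemma moves_above_minrank_less:
  assumes "sm_instance n pm pw" and "k_range_side n pm k" and "is_rotation_of n pm pw mu rho"
    and "moves_above pw rho w m" and "m < n"
  shows "minrank n pw m + 1 < minrank n pm w + 3 * k"
proof -
  obtain i where i: "i < length rho" "snd (rho ! i) = w" "pw w m < pw w (fst (rho ! i))"
    using assms(4) unfolding moves_above_def by blast
  note rot = is_rotation_ofD[OF assms(3) i(1)]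
  interpret stable_maps n pm pw mu "inv_into {..<n} mu"
    using assms(1) rot(1) by (rule stable_imp_stable_maps)
  have w: "w < n"
    using rot(3) i(2) by simp
  have "inv_into {..<n} mu w = fst (rho ! i)"
    using g_f[OF rot(2)] rot(4) i(2) by simp
  then have "pm m (mu m) \<le> pm m w"
    using no_blocking[OF assms(5) w] i(3) by (metis leD not_le)
  then show ?thesis
    using minrank_less_if_weakly_prefers_partner[OF assms(2,5) w] by blast
qed

lemma moves_below_minrank_less:
  assumes "sm_instance n pm pw" and "k_range_side n pw k" and "is_rotation_of n pm pw mu sigma"
    and "moves_below pm sigma m w" and "w < n"
  shows "minrank n pm w + 1 < minrank n pw m + 3 * k"
proof -
  obtain j where j: "j < length sigma" "fst (sigma ! j) = m"
      "pm m (snd (sigma ! j)) < pm m w" "pm m w < pm m (snd (nxt sigma j))"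
    using assms(4) unfolding moves_below_def by blast
  note rot = is_rotation_ofD[OF assms(3) j(1)]
  have m: "m < n"
    using rot(2) j(2) by simp
  interpret stable_maps n pw pm "inv_into {..<n} mu" mu
    using stable_maps.swap[OF stable_imp_stable_maps[OF assms(1) rot(1)]] .
  have "\<not> prefers_to_partner n pw mu w m"
    using rot(5)[OF assms(5)] j by simp
  then have "pw w (inv_into {..<n} mu w) \<le> pw w m"
    using prefers_to_partner_iff[OF _ assms(5)] rot(1) unfolding stable_def by (meson not_le)
  then show ?thesis
    using minrank_less_if_weakly_prefers_partner[OF assms(2,5) m] by blast
qed

lemma agent_minranks_memI:
  assumes "a \<in> set rho"
  shows "minrank n pw (fst a) \<in> agent_minranks n pm pw rho"
    and "minrank n pm (snd a) \<in> agent_minranks n pm pw rho"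
  using assms by (auto simp: agent_minranks_def minrank_man_eq_minrank minrank_woman_eq_minrank)

lemma ext_memI:
  assumes "x \<in> agent_minranks n pm pw rho" and "\<bar>i - int x\<bar> \<le> 2 * int k - 1"
  shows "i \<in> ext n pm pw k rho"
proof -
  have "finite (agent_minranks n pm pw rho)"
    unfolding agent_minranks_def by simp
  then have "Min (agent_minranks n pm pw rho) \<le> x" "x \<le> Max (agent_minranks n pm pw rho)"
    using assms(1) by auto
  then show ?thesis
    using assms(2) unfolding ext_def by auto
qed

lemma common_point_near:
  fixes x y r n :: int
  assumes "x \<in> {1..n}" and "y \<in> {1..n}" and "\<bar>x - y\<bar> \<le> 2 * r"
  shows "\<exists>i\<in>{1..n}. \<bar>i - x\<bar> \<le> r \<and> \<bar>i - y\<bar> \<le> r"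
proof
  let ?i = "max (min x y) (max x y - r)"
  show "\<bar>?i - x\<bar> \<le> r \<and> \<bar>?i - y\<bar> \<le> r"
    using assms(3) by linarith
  show "?i \<in> {1..n}"
    using assms unfolding atLeastAtMost_iff by linarith
qed

lemma ext_inter_nonempty:
  assumes "x \<in> agent_minranks n pm pw rho" and "y \<in> agent_minranks n pm pw sigma"
    and "x \<in> {1..n}" and "y \<in> {1..n}" and "\<bar>int x - int y\<bar> \<le> 4 * int k - 2"
  shows "\<exists>i::int. i \<in> {1..int n} \<and> i \<in> ext n pm pw k rho \<inter> ext n pm pw k sigma"
proof -
  obtain i where "i \<in> {1..int n}" "\<bar>i - int x\<bar> \<le> 2 * int k - 1" "\<bar>i - int y\<bar> \<le> 2 * int k - 1"
    using common_point_near[of "int x" "int n" "int y" "2 * int k - 1"] assms(3-5) by auto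
  then show ?thesis
    using ext_memI assms(1,2) by blast
qed

lemma ext_inter_nonempty_if_moves_to:
  assumes "sm_instance n pm pw" and "k_range_side n pw k" and "is_rotation_of n pm pw mu rho"
    and "(m, w) \<in> set sigma" and "moves_to rho m w"
  shows "\<exists>i::int. i \<in> {1..int n} \<and> i \<in> ext n pm pw k rho \<inter> ext n pm pw k sigma"
proof -
  obtain i where i: "i < length rho" "fst (rho ! i) = m"
    using assms(5) unfolding moves_to_def by blast
  have "m < n"
    using is_rotation_ofD(2)[OF assms(3) i(1)] i(2) by simp
  have "minrank n pw m \<in> agent_minranks n pm pw rho"
    using agent_minranks_memI(1)[OF nth_mem[OF i(1)]] i(2) by simp
  moreover have "minrank n pw m \<in> agent_minranks n pm pw sigma"
    using agent_minranks_memI(1)[OF assms(4)] by simp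
  moreover have "0 < k"
    using k_range_side_pos[OF assms(2)] \<open>m < n\<close> by simp
  ultimately show ?thesis
    using minrank_bounds[of n pw m] assms(1) \<open>m < n\<close> unfolding sm_instance_def
    by (intro ext_inter_nonempty) auto
qed

lemma ext_inter_nonempty_if_moves_above_below:
  assumes "sm_instance n pm pw" and "k_range n pm pw k"
    and rho: "is_rotation_of n pm pw mu rho" and sigma: "is_rotation_of n pm pw mu' sigma"
    and above: "moves_above pw rho w m" and below: "moves_below pm sigma m w"
  shows "\<exists>i::int. i \<in> {1..int n} \<and> i \<in> ext n pm pw k rho \<inter> ext n pm pw k sigma"
proof -
  obtain i where i: "i < length rho" "snd (rho ! i) = w"
    using above unfolding moves_above_def by blast
  obtain j where j: "j < length sigma" "fst (sigma ! j) = m"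
    using below unfolding moves_below_def by blast
  have "w < n" "m < n"
    using is_rotation_ofD(3)[OF rho i(1)] is_rotation_ofD(2)[OF sigma j(1)] i(2) j(2) by auto
  note ranges = k_range_imp_k_range_side[OF assms(2)]
  have "minrank n pm w \<in> agent_minranks n pm pw rho"
    using agent_minranks_memI(2)[OF nth_mem[OF i(1)]] i(2) by simp
  moreover have "minrank n pw m \<in> agent_minranks n pm pw sigma"
    using agent_minranks_memI(1)[OF nth_mem[OF j(1)]] j(2) by simp
  moreover have "\<bar>int (minrank n pm w) - int (minrank n pw m)\<bar> \<le> 4 * int k - 2"
    using moves_above_minrank_less[OF assms(1) ranges(1) rho above \<open>m < n\<close>]
      moves_below_minrank_less[OF assms(1) ranges(2) sigma below \<open>w < n\<close>]
    by linarith
  ultimately show ?thesis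
    using minrank_bounds[of n pw m] minrank_bounds[of n pm w] assms(1) \<open>m < n\<close> \<open>w < n\<close>
    unfolding sm_instance_def by (intro ext_inter_nonempty) auto
qed

theorem lemma7p8:
  fixes n k :: nat and pm pw :: "nat \<Rightarrow> nat \<Rightarrow> nat" and rho sigma :: "(nat \<times> nat) list"
  assumes "sm_instance n pm pw"
    and "k_range n pm pw k"
    and "rot_edge n pm pw rho sigma"
  shows "\<exists>i::int. i \<in> {1..int n} \<and> i \<in> ext n pm pw k rho \<inter> ext n pm pw k sigma"
proof -
  obtain mu mu' where rho: "is_rotation_of n pm pw mu rho" and sigma: "is_rotation_of n pm pw mu' sigma"
    using assms(3) unfolding rot_edge_def is_rotation_def by blast
  from assms(3) consider (rule1) m w where "(m, w) \<in> set sigma" "moves_to rho m w"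
    | (rule2) m w where "moves_above pw rho w m" "moves_below pm sigma m w"
    unfolding rot_edge_def by blast
  then show ?thesis
  proof cases
    case rule1
    then show ?thesis
      using ext_inter_nonempty_if_moves_to[OF assms(1) _ rho]
        k_range_imp_k_range_side(2)[OF assms(2)] by blast
  next
    case rule2
    then show ?thesis
      using ext_inter_nonempty_if_moves_above_below[OF assms(1,2) rho sigma] by blast
  qed
qed

end
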